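(* Let $G$ be a discrete group, $U=\{u_1,\dots,u_n\}\subseteq G$ a finite subset, $\mathbf k\subseteq{\rm Seq}(\mathbf C)$ a $\sigma$-subring with constants $\mathbf C$, $f:\mathbf k^n\to\mathbf k$ a polynomial map with $f(0,\dots,0)=0$, and $\varphi$ the associated non-autonomous generalized polynomial cellular automaton $\varphi(s)_g=f(s_{u_1^{-1}g},\dots,s_{u_n^{-1}g})$. Equip ${\rm Seq}(\mathbf C)$ with the topology of coincidence along finite subsets of $\mathbf Z_{\ge0}$. Then: (a) $L^c$ is dense in $L$; (b) $L^{\rm per}$ is dense in $L$ if and only if $G$ is residually finite.
   Context: ${\rm Seq}(\mathbf C)$ is the ring of complex sequences $x=(x^{(t)})_{t\in\mathbf Z_{\ge0}}$ with shift $\sigma(x)^{(t)}=x^{(t+1)}$. The topology of coincidence along finite subsets: a basic neighbourhood of $x$ consists of all sequences agreeing with $x$ on a given finite set of indices $t$. The map $f$ extends to ${\rm Seq}(\mathbf C)^n\to{\rm Seq}(\mathbf C)$ and $\varphi$ to $\mathcal C(G,{\rm Seq}(\mathbf C))$ (functions $G\to{\rm Seq}(\mathbf C)$). A solution is $s\in\mathcal C(G,{\rm Seq}(\mathbf C))$ with $\sigma(s)=\varphi(s)$, i.e. $s^{(t+1)}_g=f(s^{(t)}_{u_1^{-1}g},\dots,s^{(t)}_{u_n^{-1}g})$ (with $f$ evaluated with the coefficients at step $t$). $L$ is the smallest $\sigma$-subring of ${\rm Seq}(\mathbf C)$ containing $\mathbf k$ and all values $s_g$ of all solutions; $L^c$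 the smallest one containing $\mathbf k$ and all values of solutions $s$ such that $s^{(t)}$ has finite support for every $t$. For a subgroup $H$, $s$ is $H$-periodic if $s_g=s_{gh}$ for all $g\in G,h\in H$; $L^{\rm per}$ is the smallest $\sigma$-subring containing $\mathbf k$ and all values of solutions that are $H$-periodic for some normal subgroup $H$ of finite index. *)

theory Defs
  imports Complex_Main "HOL-Algebra.Coset"
begin

text \<open>Seq(C) is modelled as the type nat => complex with pointwise ring operations.\<close>

definition sigma_subring :: "(nat \<Rightarrow> complex) set \<Rightarrow> bool" where
  "sigma_subring S \<longleftrightarrow>
     (\<lambda>t. 1) \<in> S \<and>
     (\<forall>x\<in>S. \<forall>y\<in>S. (\<lambda>t. x t + y t) \<in> S \<and> (\<lambda>t. x t * y t) \<in> S) \<and>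
     (\<forall>x\<in>S. (\<lambda>t. - x t) \<in> S) \<and>
     (\<forall>x\<in>S. (\<lambda>t. x (Suc t)) \<in> S)"

definition sigma_hull :: "(nat \<Rightarrow> complex) set \<Rightarrow> (nat \<Rightarrow> complex) set" where
  "sigma_hull A = \<Inter> {S. sigma_subring S \<and> A \<subseteq> S}"

definition has_constants :: "(nat \<Rightarrow> complex) set \<Rightarrow> bool" where
  "has_constants k \<longleftrightarrow> (\<forall>c. (\<lambda>t. c) \<in> k)"

text \<open>Polynomial maps in the variables x 0, ..., x (n-1) with coefficients in k,
  extended to Seq(C)^n (operations pointwise).\<close>
inductive_set polymaps ::
  "(nat \<Rightarrow> complex) set \<Rightarrow> nat \<Rightarrow> ((nat \<Rightarrow> nat \<Rightarrow> complex) \<Rightarrow> nat \<Rightarrow> complex) set"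
  for k :: "(nat \<Rightarrow> complex) set" and n :: nat where
  const: "c \<in> k \<Longrightarrow> (\<lambda>x. c) \<in> polymaps k n"
| var: "i < n \<Longrightarrow> (\<lambda>x. x i) \<in> polymaps k n"
| add: "p \<in> polymaps k n \<Longrightarrow> q \<in> polymaps k n \<Longrightarrow> (\<lambda>x t. p x t + q x t) \<in> polymaps k n"
| mult: "p \<in> polymaps k n \<Longrightarrow> q \<in> polymaps k n \<Longrightarrow> (\<lambda>x t. p x t * q x t) \<in> polymaps k n"

text \<open>Standing hypotheses: U = {u 0, ..., u (n-1)} a finite subset of G (listed without
  repetition), k a sigma-subring with constants C, f a polynomial map k^n -> k with f(0)=0.\<close>
definition ca_data :: "('g, 'b) monoid_scheme \<Rightarrow> nat \<Rightarrow> (nat \<Rightarrow> 'g) \<Rightarrow>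
    (nat \<Rightarrow> complex) set \<Rightarrow> ((nat \<Rightarrow> nat \<Rightarrow> complex) \<Rightarrow> nat \<Rightarrow> complex) \<Rightarrow> bool" where
  "ca_data G n u k f \<longleftrightarrow>
     (\<forall>i<n. u i \<in> carrier G) \<and> inj_on u {..<n} \<and>
     sigma_subring k \<and> has_constants k \<and>
     f \<in> polymaps k n \<and> f (\<lambda>i t. 0) = (\<lambda>t. 0)"

text \<open>s is a solution: sigma(s) = phi(s), i.e.
  s_g^(t+1) = f(s_(u_1^-1 g), ..., s_(u_n^-1 g))^(t).\<close>
definition is_solution :: "('g, 'b) monoid_scheme \<Rightarrow> (nat \<Rightarrow> 'g) \<Rightarrow>
    ((nat \<Rightarrow> nat \<Rightarrow> complex) \<Rightarrow> nat \<Rightarrow> complex) \<Rightarrow> ('g \<Rightarrow> nat \<Rightarrow> complex) \<Rightarrow> bool" where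
  "is_solution G u f s \<longleftrightarrow>
     (\<forall>g\<in>carrier G. \<forall>t. s g (Suc t) = f (\<lambda>i. s (inv\<^bsub>G\<^esub> (u i) \<otimes>\<^bsub>G\<^esub> g)) t)"

definition solution_values :: "('g, 'b) monoid_scheme \<Rightarrow> (nat \<Rightarrow> 'g) \<Rightarrow>
    ((nat \<Rightarrow> nat \<Rightarrow> complex) \<Rightarrow> nat \<Rightarrow> complex) \<Rightarrow> (('g \<Rightarrow> nat \<Rightarrow> complex) \<Rightarrow> bool)
    \<Rightarrow> (nat \<Rightarrow> complex) set" where
  "solution_values G u f P = {s g | s g. g \<in> carrier G \<and> is_solution G u f s \<and> P s}"

definition finite_index :: "('g, 'b) monoid_scheme \<Rightarrow> 'g set \<Rightarrow> bool" where
  "finite_index G H \<longleftrightarrow> finite (rcosets\<^bsub>G\<^esub> H)"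

definition periodic :: "('g, 'b) monoid_scheme \<Rightarrow> 'g set \<Rightarrow> ('g \<Rightarrow> 'c) \<Rightarrow> bool" where
  "periodic G H s \<longleftrightarrow> (\<forall>g\<in>carrier G. \<forall>h\<in>H. s g = s (g \<otimes>\<^bsub>G\<^esub> h))"

definition L_all where
  "L_all G u k f = sigma_hull (k \<union> solution_values G u f (\<lambda>s. True))"

definition L_c where
  "L_c G u k f = sigma_hull (k \<union> solution_values G u f
      (\<lambda>s. \<forall>t. finite {g \<in> carrier G. s g t \<noteq> 0}))"

definition L_per where
  "L_per G u k f = sigma_hull (k \<union> solution_values G u f
      (\<lambda>s. \<exists>H. normal H G \<and> finite_index G H \<and> periodic G H s))"

text \<open>Density for the topology of coincidence along finite subsets of indices.\<close>
definition dense_coinc :: "(nat \<Rightarrow> complex) set \<Rightarrow> (nat \<Rightarrow> complex) set \<Rightarrow> bool" where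
  "dense_coinc A B \<longleftrightarrow>
     (\<forall>x\<in>B. \<forall>F. finite F \<longrightarrow> (\<exists>y\<in>A. \<forall>t\<in>F. y t = x t))"

definition residually_finite :: "('g, 'b) monoid_scheme \<Rightarrow> bool" where
  "residually_finite G \<longleftrightarrow>
     (\<forall>g\<in>carrier G. g \<noteq> \<one>\<^bsub>G\<^esub> \<longrightarrow>
        (\<exists>H. normal H G \<and> finite_index G H \<and> g \<notin> H))"

end

theory Submission
  imports Defs "HOL-Algebra.Generated_Groups"
begin

text \<open>The sequences approximable, on every finite set of times, by elements of a \<open>\<sigma>\<close>-subring
  again form a \<open>\<sigma>\<close>-subring, so density only has to be checked on the generators \<open>s\<^sub>g\<close> of \<open>L\<close>.
  Up to time \<open>t\<close> the value \<open>s\<^sub>g\<close> depends only on the initial configuration on the finite cone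
  \<open>{w g | w a word of length t in the u\<^sub>i\<inverse>}\<close>. Restarting the automaton from initial data that agree
  with \<open>s\<close> at time 0 on this cone and vanish elsewhere gives a finitely supported solution (as \<open>f(0) = 0\<close>);
  if \<open>G\<close> is residually finite, a normal subgroup \<open>H\<close> of finite index separates the points of the cone,
  and extending the data \<open>H\<close>-periodically gives an \<open>H\<close>-periodic solution, because the automaton
  commutes with right translations.\<close>

lemma sigma_hull_superset: "A \<subseteq> sigma_hull A"
  unfolding sigma_hull_def by auto

lemma sigma_hull_least: "sigma_subring S \<Longrightarrow> A \<subseteq> S \<Longrightarrow> sigma_hull A \<subseteq> S"
  unfolding sigma_hull_def by auto

lemma sigma_subring_sigma_hull: "sigma_subring (sigma_hull A)"
  unfolding sigma_subring_def sigma_hull_def by blast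

definition approximable :: "(nat \<Rightarrow> complex) set \<Rightarrow> (nat \<Rightarrow> complex) \<Rightarrow> bool" where
  "approximable A x \<longleftrightarrow> (\<forall>F. finite F \<longrightarrow> (\<exists>y\<in>A. \<forall>t\<in>F. y t = x t))"

lemma approximable_mem: "x \<in> A \<Longrightarrow> approximable A x"
  unfolding approximable_def by blast

lemma approximable_binop:
  assumes "\<And>a b. a \<in> A \<Longrightarrow> b \<in> A \<Longrightarrow> (\<lambda>t. op (a t) (b t)) \<in> A"
    and "approximable A x" and "approximable A y"
  shows "approximable A (\<lambda>t. op (x t) (y t))"
  unfolding approximable_def
proof (intro allI impI)
  fix F :: "nat set" assume "finite F"
  then obtain a b where "a \<in> A" "b \<in> A" "\<forall>t\<in>F. a t = x t" "\<forall>t\<in>F. b t = y t"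
    using assms(2,3) unfolding approximable_def by meson
  then show "\<exists>z\<in>A. \<forall>t\<in>F. z t = op (x t) (y t)"
    using assms(1) by (intro bexI[of _ "\<lambda>t. op (a t) (b t)"]) auto
qed

lemma approximable_comp:
  assumes "\<And>a. a \<in> A \<Longrightarrow> (\<lambda>t. \<phi> (a (r t))) \<in> A" and "approximable A x"
  shows "approximable A (\<lambda>t. \<phi> (x (r t)))"
  unfolding approximable_def
proof (intro allI impI)
  fix F :: "nat set" assume "finite F"
  then obtain a where "a \<in> A" "\<forall>t\<in>r ` F. a t = x t"
    using assms(2) unfolding approximable_def by blast
  then show "\<exists>z\<in>A. \<forall>t\<in>F. z t = \<phi> (x (r t))"
    using assms(1) by (intro bexI[of _ "\<lambda>t. \<phi> (a (r t))"]) auto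
qed

lemma sigma_subring_approximable:
  assumes "sigma_subring A"
  shows "sigma_subring {x. approximable A x}"
  using assms unfolding sigma_subring_def
  by (auto intro: approximable_mem approximable_binop
      approximable_comp[where r = id, simplified] approximable_comp[where \<phi> = id, simplified])

lemma dense_coinc_sigma_hullI:
  assumes "\<And>x. x \<in> B \<Longrightarrow> approximable (sigma_hull A) x"
  shows "dense_coinc (sigma_hull A) (sigma_hull B)"
proof -
  have "sigma_hull B \<subseteq> {x. approximable (sigma_hull A) x}"
    using assms by (intro sigma_hull_least sigma_subring_approximable sigma_subring_sigma_hull) blast
  then show ?thesis unfolding dense_coinc_def approximable_def by blast
qed

lemma sigma_subring_constants: "sigma_subring (range (\<lambda>c (t::nat). c :: complex))"
  unfolding sigma_subring_def by force

lemma sigma_subring_constant_after_one: "sigma_subring {x. \<forall>t. x (Suc t) = x (Suc 0)}"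
  unfolding sigma_subring_def by (auto; metis)

lemma polymaps_pointwise:
  "p \<in> polymaps k n \<Longrightarrow> (\<And>i. i < n \<Longrightarrow> x i t = y i t) \<Longrightarrow> p x t = p y t"
  by (induction rule: polymaps.induct) auto

lemma ca_rule_vanishes:
  assumes "ca_data G n u k f" and "\<And>i. i < n \<Longrightarrow> x i t = 0"
  shows "f x t = 0"
proof -
  have "f \<in> polymaps k n" and "f (\<lambda>i t. 0) = (\<lambda>t. 0)"
    using assms(1) unfolding ca_data_def by auto
  then show ?thesis
    using polymaps_pointwise[of f k n x t "\<lambda>i t. 0"] assms(2) by metis
qed

text \<open>Since a polymap acts pointwise in time, feeding it the constant sequences of time-\<open>t\<close>
  values computes its value at time \<open>t\<close>.\<close>
fun evolve :: "('g, 'b) monoid_scheme \<Rightarrow> (nat \<Rightarrow> 'g) \<Rightarrow>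
    ((nat \<Rightarrow> nat \<Rightarrow> complex) \<Rightarrow> nat \<Rightarrow> complex) \<Rightarrow> ('g \<Rightarrow> complex) \<Rightarrow> nat \<Rightarrow> 'g \<Rightarrow> complex" where
  "evolve G u f c 0 = c"
| "evolve G u f c (Suc t) = (\<lambda>g. f (\<lambda>i _. evolve G u f c t (inv\<^bsub>G\<^esub> (u i) \<otimes>\<^bsub>G\<^esub> g)) t)"

definition solution_from :: "('g, 'b) monoid_scheme \<Rightarrow> (nat \<Rightarrow> 'g) \<Rightarrow>
    ((nat \<Rightarrow> nat \<Rightarrow> complex) \<Rightarrow> nat \<Rightarrow> complex) \<Rightarrow> ('g \<Rightarrow> complex) \<Rightarrow> 'g \<Rightarrow> nat \<Rightarrow> complex" where
  "solution_from G u f c = (\<lambda>g t. evolve G u f c t g)"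

lemma is_solution_solution_from:
  assumes "f \<in> polymaps k n"
  shows "is_solution G u f (solution_from G u f c)"
  unfolding is_solution_def solution_from_def
  by (auto intro: polymaps_pointwise[OF assms])

lemma solution_from_0: "solution_from G u f c g 0 = c g"
  by (simp add: solution_from_def)

fun dependency_cone :: "('g, 'b) monoid_scheme \<Rightarrow> (nat \<Rightarrow> 'g) \<Rightarrow> nat \<Rightarrow> 'g \<Rightarrow> nat \<Rightarrow> 'g set" where
  "dependency_cone G u n g 0 = {g}"
| "dependency_cone G u n g (Suc t) = (\<Union>i<n. dependency_cone G u n (inv\<^bsub>G\<^esub> (u i) \<otimes>\<^bsub>G\<^esub> g) t)"

lemma finite_dependency_cone: "finite (dependency_cone G u n g t)"
  by (induction t arbitrary: g) auto

context group
begin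

lemma dependency_cone_subset_carrier:
  "\<forall>i<n. u i \<in> carrier G \<Longrightarrow> g \<in> carrier G \<Longrightarrow> dependency_cone G u n g t \<subseteq> carrier G"
  by (induction t arbitrary: g) (simp_all add: UN_subset_iff)

lemma solutions_agree_on_cone:
  assumes f: "f \<in> polymaps k n" and u: "\<forall>i<n. u i \<in> carrier G"
    and s: "is_solution G u f s" and s': "is_solution G u f s'"
  shows "g \<in> carrier G \<Longrightarrow> \<forall>x\<in>dependency_cone G u n g t. s x 0 = s' x 0 \<Longrightarrow> s g t = s' g t"
proof (induction t arbitrary: g)
  case 0
  then show ?case by simp
next
  case (Suc t)
  have "s (inv (u i) \<otimes> g) t = s' (inv (u i) \<otimes> g) t" if "i < n" for i
    using Suc.prems that u by (intro Suc.IH) auto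
  then have "f (\<lambda>i. s (inv (u i) \<otimes> g)) t = f (\<lambda>i. s' (inv (u i) \<otimes> g)) t"
    by (rule polymaps_pointwise[OF f])
  with s s' Suc.prems(1) show ?case
    unfolding is_solution_def by simp
qed

lemma dense_coinc_solution_hull:
  assumes f: "f \<in> polymaps k n" and u: "\<forall>i<n. u i \<in> carrier G"
    and initial: "\<And>D c0. finite D \<Longrightarrow> D \<subseteq> carrier G \<Longrightarrow>
        \<exists>c. (\<forall>x\<in>D. c x = c0 x) \<and> P (solution_from G u f c)"
  shows "dense_coinc (sigma_hull (k \<union> solution_values G u f P))
                     (sigma_hull (k \<union> solution_values G u f (\<lambda>s. True)))"
proof (rule dense_coinc_sigma_hullI)
  let ?A = "k \<union> solution_values G u f P"
  fix x assume "x \<in> k \<union> solution_values G u f (\<lambda>s. True)"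
  then consider "x \<in> k" | s g where "x = s g" "g \<in> carrier G" "is_solution G u f s"
    unfolding solution_values_def by blast
  then show "approximable (sigma_hull ?A) x"
  proof cases
    case 1
    then show ?thesis using sigma_hull_superset by (blast intro: approximable_mem)
  next
    case (2 s g)
    show ?thesis
      unfolding approximable_def
    proof (intro allI impI)
      fix F :: "nat set" assume "finite F"
      let ?D = "\<Union>t\<in>F. dependency_cone G u n g t"
      have D_finite: "finite ?D"
        using \<open>finite F\<close> by (intro finite_UN_I finite_dependency_cone)
      have D_carrier: "?D \<subseteq> carrier G"
        using dependency_cone_subset_carrier[OF u \<open>g \<in> carrier G\<close>] by (rule UN_least)
      obtain c where c: "\<forall>x\<in>?D. c x = s x 0" and P: "P (solution_from G u f c)"
        using initial[OF D_finite D_carrier, of "\<lambda>x. s x 0"] by blast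
      have "solution_from G u f c g t = s g t" if "t \<in> F" for t
      proof (rule solutions_agree_on_cone[OF f u is_solution_solution_from[OF f] 2(3) 2(2)])
        show "\<forall>y\<in>dependency_cone G u n g t. solution_from G u f c y 0 = s y 0"
          using that c by (auto simp only: solution_from_0 UN_iff)
      qed
      moreover have "solution_from G u f c g \<in> solution_values G u f P"
        using 2(2) P is_solution_solution_from[OF f, where c = c]
        unfolding solution_values_def by blast
      then have "solution_from G u f c g \<in> sigma_hull ?A"
        using sigma_hull_superset by blast
      ultimately show "\<exists>y\<in>sigma_hull ?A. \<forall>t\<in>F. y t = x t"
        using 2(1) by blast
    qed
  qed
qed

lemma evolve_finite_support:
  assumes ca: "ca_data G n u k f" and c: "finite {g \<in> carrier G. c g \<noteq> 0}"
  shows "finite {g \<in> carrier G. evolve G u f c t g \<noteq> 0}"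
proof (induction t)
  case 0
  with c show ?case by simp
next
  case (Suc t)
  let ?S = "{g \<in> carrier G. evolve G u f c t g \<noteq> 0}"
  have u: "\<forall>i<n. u i \<in> carrier G"
    using ca unfolding ca_data_def by blast
  have "{g \<in> carrier G. evolve G u f c (Suc t) g \<noteq> 0} \<subseteq> (\<Union>i<n. (\<otimes>) (u i) ` ?S)"
  proof
    fix g assume g: "g \<in> {g \<in> carrier G. evolve G u f c (Suc t) g \<noteq> 0}"
    then obtain i where i: "i < n" "evolve G u f c t (inv (u i) \<otimes> g) \<noteq> 0"
      using ca_rule_vanishes[OF ca, of "\<lambda>i _. evolve G u f c t (inv (u i) \<otimes> g)" t] by auto
    moreover have "g = u i \<otimes> (inv (u i) \<otimes> g)"
      using i u g by (simp add: m_assoc[symmetric])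
    ultimately show "g \<in> (\<Union>i<n. (\<otimes>) (u i) ` ?S)"
      using u g by blast
  qed
  moreover have "finite (\<Union>i<n. (\<otimes>) (u i) ` ?S)"
    using Suc.IH by simp
  ultimately show ?case
    by (rule finite_subset)
qed

lemma dense_coinc_L_c:
  assumes ca: "ca_data G n u k f"
  shows "dense_coinc (L_c G u k f) (L_all G u k f)"
proof -
  have f: "f \<in> polymaps k n" and u: "\<forall>i<n. u i \<in> carrier G"
    using ca unfolding ca_data_def by auto
  have "\<exists>c. (\<forall>x\<in>D. c x = c0 x) \<and> (\<forall>t. finite {g \<in> carrier G. solution_from G u f c g t \<noteq> 0})"
    if "finite D" for D and c0 :: "'a \<Rightarrow> complex"
  proof (intro exI conjI allI)
    let ?c = "\<lambda>g. if g \<in> D then c0 g else 0"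
    show "\<forall>x\<in>D. ?c x = c0 x" by simp
    have "finite {g \<in> carrier G. ?c g \<noteq> 0}"
      using \<open>finite D\<close> by (rule rev_finite_subset) auto
    then show "finite {g \<in> carrier G. solution_from G u f ?c g t \<noteq> 0}" for t
      unfolding solution_from_def by (rule evolve_finite_support[OF ca])
  qed
  then show ?thesis
    unfolding L_c_def L_all_def by (intro dense_coinc_solution_hull[OF f u]) blast
qed

lemma rcos_Int:
  assumes M: "subgroup M G" and N: "subgroup N G" and a: "a \<in> carrier G"
  shows "(M \<inter> N) #> a = (M #> a) \<inter> (N #> a)"
proof -
  have MN: "subgroup (M \<inter> N) G"
    using M N by (rule subgroups_Inter_pair)
  have "x \<in> (M \<inter> N) #> a \<longleftrightarrow> x \<in> (M #> a) \<inter> (N #> a)" if "x \<in> carrier G" for x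
    using that by (simp add: subgroup.rcos_module[OF MN is_group a]
        subgroup.rcos_module[OF M is_group a] subgroup.rcos_module[OF N is_group a])
  moreover have "(M \<inter> N) #> a \<subseteq> carrier G" "M #> a \<subseteq> carrier G"
    using subgroup.elemrcos_carrier[OF MN is_group a] subgroup.elemrcos_carrier[OF M is_group a]
    by blast+
  ultimately show ?thesis by blast
qed

lemma finite_index_Int:
  assumes M: "subgroup M G" and N: "subgroup N G"
    and "finite_index G M" "finite_index G N"
  shows "finite_index G (M \<inter> N)"
proof -
  have "rcosets (M \<inter> N) \<subseteq> (\<lambda>(X, Y). X \<inter> Y) ` ((rcosets M) \<times> (rcosets N))"
  proof
    fix X assume "X \<in> rcosets (M \<inter> N)"
    then obtain a where a: "a \<in> carrier G" "X = (M \<inter> N) #> a"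
      unfolding RCOSETS_def by blast
    then have "X = (\<lambda>(X, Y). X \<inter> Y) (M #> a, N #> a)"
      using rcos_Int[OF M N] by simp
    moreover have "(M #> a, N #> a) \<in> (rcosets M) \<times> (rcosets N)"
      using a(1) by (simp add: rcosetsI subgroup.subset[OF M] subgroup.subset[OF N])
    ultimately show "X \<in> (\<lambda>(X, Y). X \<inter> Y) ` ((rcosets M) \<times> (rcosets N))"
      by (rule image_eqI)
  qed
  moreover have "finite ((\<lambda>(X, Y). X \<inter> Y) ` ((rcosets M) \<times> (rcosets N)))"
    using assms(3,4) unfolding finite_index_def by simp
  ultimately show ?thesis
    unfolding finite_index_def by (rule finite_subset)
qed

lemma finite_index_carrier: "finite_index G (carrier G)"
proof -
  have "rcosets (carrier G) \<subseteq> {carrier G}"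
    unfolding RCOSETS_def using coset_join2[OF _ subgroup_self] by auto
  then show ?thesis
    unfolding finite_index_def using finite_subset by blast
qed

lemma residually_finite_avoids_finite_set:
  assumes rf: "residually_finite G"
  shows "finite X \<Longrightarrow> X \<subseteq> carrier G \<Longrightarrow> \<one> \<notin> X \<Longrightarrow>
    \<exists>H. H \<lhd> G \<and> finite_index G H \<and> H \<inter> X = {}"
proof (induction X rule: finite_induct)
  case empty
  show ?case using normal_self finite_index_carrier by blast
next
  case (insert x X)
  then obtain H1 where H1: "H1 \<lhd> G" "finite_index G H1" "H1 \<inter> X = {}"
    by auto
  obtain H2 where H2: "H2 \<lhd> G" "finite_index G H2" "x \<notin> H2"
    using rf insert.prems unfolding residually_finite_def by auto
  have "H1 \<inter> H2 \<lhd> G" "finite_index G (H1 \<inter> H2)"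
    using H1 H2 by (auto intro: normal_subgroup_intersect finite_index_Int normal_imp_subgroup)
  then show ?case
    using H1(3) H2(3) by blast
qed

text \<open>The classes of \<open>rcong H\<close> are the left cosets \<open>g <# H\<close>.\<close>
lemma periodic_extension:
  assumes H: "subgroup H G" and D: "D \<subseteq> carrier G"
    and separated: "\<And>a b. a \<in> D \<Longrightarrow> b \<in> D \<Longrightarrow> (a, b) \<in> rcong H \<Longrightarrow> a = b"
  obtains c where "\<And>x. x \<in> D \<Longrightarrow> c x = c0 x"
    and "\<And>g h. g \<in> carrier G \<Longrightarrow> h \<in> H \<Longrightarrow> c (g \<otimes> h) = c g"
proof
  let ?c = "\<lambda>g. c0 (SOME a. a \<in> D \<and> (a, g) \<in> rcong H)"
  have equiv: "equiv (carrier G) (rcong H)"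
    using H is_group by (rule subgroup.equiv_rcong)
  show "?c x = c0 x" if "x \<in> D" for x
  proof -
    have "(x, x) \<in> rcong H"
      using equiv that D unfolding equiv_def refl_on_def by blast
    then have "(SOME a. a \<in> D \<and> (a, x) \<in> rcong H) = x"
      using that separated by (intro some_equality) auto
    then show ?thesis by simp
  qed
  \<comment> \<open>No case split on whether the coset of \<open>g\<close> meets \<open>D\<close>: the predicate under \<open>SOME\<close>
    is the same along the coset, empty or not.\<close>
  show "?c (g \<otimes> h) = ?c g" if "g \<in> carrier G" "h \<in> H" for g h
  proof -
    have "(g, g \<otimes> h) \<in> rcong H"
      using that H by (simp add: r_congruent_def m_assoc[symmetric] subgroup.mem_carrier)
    then have "((a, g \<otimes> h) \<in> rcong H) \<longleftrightarrow> ((a, g) \<in> rcong H)" for a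
      using equiv unfolding equiv_def by (meson symD transD)
    then show ?thesis by simp
  qed
qed

lemma evolve_right_periodic:
  assumes f: "f \<in> polymaps k n" and u: "\<forall>i<n. u i \<in> carrier G" and H: "subgroup H G"
    and c: "\<And>g h. g \<in> carrier G \<Longrightarrow> h \<in> H \<Longrightarrow> c (g \<otimes> h) = c g"
  shows "g \<in> carrier G \<Longrightarrow> h \<in> H \<Longrightarrow> evolve G u f c t (g \<otimes> h) = evolve G u f c t g"
proof (induction t arbitrary: g)
  case 0
  then show ?case using c by simp
next
  case (Suc t)
  have "evolve G u f c t (inv (u i) \<otimes> (g \<otimes> h)) = evolve G u f c t (inv (u i) \<otimes> g)" if "i < n" for i
    using Suc.IH[of "inv (u i) \<otimes> g"] Suc.prems that u H by (simp add: m_assoc subgroup.mem_carrier)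
  then show ?case
    by (simp, intro polymaps_pointwise[OF f])
qed

lemma dense_coinc_L_per:
  assumes rf: "residually_finite G" and ca: "ca_data G n u k f"
  shows "dense_coinc (L_per G u k f) (L_all G u k f)"
proof -
  have f: "f \<in> polymaps k n" and u: "\<forall>i<n. u i \<in> carrier G"
    using ca unfolding ca_data_def by auto
  have "\<exists>c. (\<forall>x\<in>D. c x = c0 x) \<and>
      (\<exists>H. H \<lhd> G \<and> finite_index G H \<and> periodic G H (solution_from G u f c))"
    if D: "finite D" "D \<subseteq> carrier G" for D and c0 :: "'a \<Rightarrow> complex"
  proof -
    let ?X = "(\<lambda>(a, b). inv a \<otimes> b) ` {(a, b) \<in> D \<times> D. a \<noteq> b}"
    have "finite ?X"
      using D(1) by (intro finite_imageI finite_subset[OF _ finite_cartesian_product]) auto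
    moreover have "?X \<subseteq> carrier G"
      using D(2) by (auto simp: subset_iff)
    moreover have "\<one> \<notin> ?X"
    proof
      assume "\<one> \<in> ?X"
      then obtain a b where "a \<in> D" "b \<in> D" "a \<noteq> b" "inv a \<otimes> b = \<one>"
        by auto
      with D(2) show False
        by (simp add: subset_iff inv_solve_left')
    qed
    ultimately obtain H where H: "H \<lhd> G" "finite_index G H" "H \<inter> ?X = {}"
      using residually_finite_avoids_finite_set[OF rf] by meson
    have Hs: "subgroup H G"
      using H(1) by (rule normal_imp_subgroup)
    have separated: "a = b" if "a \<in> D" "b \<in> D" "(a, b) \<in> rcong H" for a b
    proof (rule ccontr)
      assume "a \<noteq> b"
      then have "inv a \<otimes> b \<in> ?X"
        using that(1,2) by (intro image_eqI[of _ _ "(a, b)"]) auto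
      moreover have "inv a \<otimes> b \<in> H"
        using that(3) unfolding r_congruent_def by simp
      ultimately show False
        using H(3) by blast
    qed
    obtain c where c: "\<And>x. x \<in> D \<Longrightarrow> c x = c0 x"
      and c_periodic: "\<And>g h. g \<in> carrier G \<Longrightarrow> h \<in> H \<Longrightarrow> c (g \<otimes> h) = c g"
      using periodic_extension[OF Hs D(2) separated, of c0] by blast
    have "periodic G H (solution_from G u f c)"
      unfolding periodic_def solution_from_def
      using evolve_right_periodic[OF f u Hs c_periodic] by simp
    then show ?thesis
      using c H(1,2) by blast
  qed
  then show ?thesis
    unfolding L_per_def L_all_def by (intro dense_coinc_solution_hull[OF f u]) blast
qed

text \<open>Counterexample: the rule \<open>\<phi>(s)\<^sub>g = s\<^sub>g - s\<^bsub>g\<^sub>0 g\<^esub>\<close> for some \<open>g\<^sub>0 \<noteq> \<one>\<close> lying in every normal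
  subgroup of finite index. Periodic solutions then vanish from time 1 on, so all of \<open>L_per\<close> is
  constant from time 1 on, whereas the solution started from the indicator of \<open>\<one>\<close> takes the
  values \<open>-1, -2\<close> at \<open>g\<^sub>0\<inverse>\<close> at times 1 and 2.\<close>
lemma not_residually_finite_not_dense_L_per:
  assumes "\<not> residually_finite G"
  shows "\<exists>n u k f. ca_data G n u k f \<and> \<not> dense_coinc (L_per G u k f) (L_all G u k f)"
proof -
  obtain g0 where g0: "g0 \<in> carrier G" "g0 \<noteq> \<one>"
    and g0_in: "\<And>H. H \<lhd> G \<Longrightarrow> finite_index G H \<Longrightarrow> g0 \<in> H"
    using assms unfolding residually_finite_def by blast
  define u :: "nat \<Rightarrow> 'a" where "u i = (if i = 0 then \<one> else inv g0)" for i
  define k :: "(nat \<Rightarrow> complex) set" where "k = range (\<lambda>c t. c)"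
  define f :: "(nat \<Rightarrow> nat \<Rightarrow> complex) \<Rightarrow> nat \<Rightarrow> complex"
    where "f x t = x 0 t + (- 1) * x 1 t" for x t
  have f_poly: "f \<in> polymaps k 2"
    unfolding f_def k_def by (intro polymaps.intros) auto
  have inv_g0: "inv g0 \<noteq> \<one>"
    using g0 by simp
  then have "inj_on u {..<2}"
    by (auto simp: u_def inj_on_def less_Suc_eq)
  then have ca: "ca_data G 2 u k f"
    using g0 f_poly sigma_subring_constants
    unfolding ca_data_def has_constants_def k_def by (auto simp: u_def f_def)
  have f_apply: "f (\<lambda>i. s (inv (u i) \<otimes> g)) t = s g t - s (g0 \<otimes> g) t"
    if "g \<in> carrier G" for s :: "'a \<Rightarrow> nat \<Rightarrow> complex" and g t
    using that g0 by (simp add: u_def f_def)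
  let ?S = "{x :: nat \<Rightarrow> complex. \<forall>t. x (Suc t) = x (Suc 0)}"
  have periodic_values: "s g \<in> ?S" if s: "is_solution G u f s" and g: "g \<in> carrier G"
    and H: "H \<lhd> G" "finite_index G H" "periodic G H s" for s g H
  proof -
    have "inv g \<otimes> g0 \<otimes> g \<in> H"
      using normal.inv_op_closed1[OF H(1) g g0_in[OF H(1,2)]] .
    moreover have "g \<otimes> (inv g \<otimes> g0 \<otimes> g) = g0 \<otimes> g"
      using g g0 by (simp add: m_assoc[symmetric])
    ultimately have "s (g0 \<otimes> g) = s g"
      using H(3) g unfolding periodic_def by metis
    then have "s g (Suc t) = 0" for t
      using s g f_apply unfolding is_solution_def by simp
    then show ?thesis by simp
  qed
  have "k \<subseteq> ?S"
    unfolding k_def by auto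
  moreover have "solution_values G u f (\<lambda>s. \<exists>H. H \<lhd> G \<and> finite_index G H \<and> periodic G H s) \<subseteq> ?S"
    unfolding solution_values_def using periodic_values by blast
  ultimately have L_per_S: "L_per G u k f \<subseteq> ?S"
    unfolding L_per_def by (intro sigma_hull_least sigma_subring_constant_after_one) blast
  define c :: "'a \<Rightarrow> complex" where "c g = (if g = \<one> then 1 else 0)" for g
  have evolve_Suc: "evolve G u f c (Suc t) g = evolve G u f c t g - evolve G u f c t (g0 \<otimes> g)"
    if "g \<in> carrier G" for t g
    using f_apply[OF that, of "\<lambda>g _. evolve G u f c t g"] by simp
  have at_1: "evolve G u f c 1 (inv g0) = - 1" and "evolve G u f c 1 \<one> = 1"
    using evolve_Suc[of "inv g0" 0] evolve_Suc[of \<one> 0] g0 inv_g0 by (simp_all add: c_def)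
  then have at_2: "evolve G u f c 2 (inv g0) = - 2"
    using evolve_Suc[of "inv g0" 1] g0 by (simp add: numeral_2_eq_2)
  have "solution_from G u f c (inv g0) \<in> solution_values G u f (\<lambda>s. True)"
    using is_solution_solution_from[OF f_poly, where c = c] g0
    unfolding solution_values_def by blast
  then have "solution_from G u f c (inv g0) \<in> L_all G u k f"
    unfolding L_all_def using sigma_hull_superset by blast
  moreover have "\<not> (\<forall>t\<in>{1, 2}. z t = solution_from G u f c (inv g0) t)"
    if "z \<in> L_per G u k f" for z
  proof
    assume "\<forall>t\<in>{1, 2}. z t = solution_from G u f c (inv g0) t"
    then have "z 1 = - 1" "z 2 = - 2"
      using at_1 at_2 by (simp_all add: solution_from_def)
    moreover have "z 2 = z 1"
      using L_per_S that by (auto simp: numeral_2_eq_2)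
    ultimately show False by simp
  qed
  ultimately have "\<not> dense_coinc (L_per G u k f) (L_all G u k f)"
    unfolding dense_coinc_def by (metis finite.emptyI finite_insert)
  with ca show ?thesis by blast
qed

end

theorem proposition1p6:
  fixes G :: "('g, 'b) monoid_scheme"
  assumes "group G"
  shows "(\<forall>n u k f. ca_data G n u k f \<longrightarrow> dense_coinc (L_c G u k f) (L_all G u k f))
       \<and> (residually_finite G \<longleftrightarrow>
            (\<forall>n u k f. ca_data G n u k f \<longrightarrow> dense_coinc (L_per G u k f) (L_all G u k f)))"
proof -
  interpret group G by fact
  have "residually_finite G"
    if "\<forall>n u k f. ca_data G n u k f \<longrightarrow> dense_coinc (L_per G u k f) (L_all G u k f)"
    using that not_residually_finite_not_dense_L_per by blast
  then show ?thesis
    using dense_coinc_L_c dense_coinc_L_per by blast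
qed

end
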